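(* MUDAN (for any admissible priority rule) is incentive compatible: for every true profile $\theta$, every buyer $i$, every global profile $\theta'$ and every report $\theta''_i=(v''_i,r''_i)$ with $r''_i\subseteq r_i$, we have $u_i(\theta_i,\theta'_{-i})\ge u_i(\theta''_i,\theta''_{-i})$, where $\theta''_{-i}$ is obtained from $\theta'_{-i}$ by replacing by the silent report $(0,\varnothing)$ the report of every buyer that is not reachable from $s$ in the profile graph when $i$ reports $\theta''_i$.
   Context: Single-demand model. A seller $s$ has $m\ge 1$ identical items. Buyers $B=\{1,\dots,n\}$; each buyer $i$ wants at most one item and has a private true profile $\theta_i=(v_i,r_i)$, where $v_i\in\mathbb{R}_{\ge 0}$ is its valuation and $r_i\subseteq B$ its set of out-neighbours. The seller has a fixed, publicly known neighbour set $r_s\subseteq B$, and every buyer is reachable from $s$ in the directed graph with edges $(x,y)$ for $y\in r_x$. A buyer reports $\theta'_i=(v'_i,r'_i)$ with $v'_i\in\mathbb{R}_{\ge0}$ and $r'_i\subseteq r_i$. A global profile $\theta'=(\theta'_1,\dots,\theta'_n)$ determines the profile graph $G_{\theta'}$ on $\{s\}\cup B$ with an edge $(x,y)$ iff $y\in r'_x$ (for $x=s$ use $r_s$). Only buyers reachable from $s$ in $G_{\theta'}$ take part; an unreachable buyer is treated as having the silent report $(0,\varnothing)$ and gets no item and zero payment. A mechanism maps each global profile $\theta'$ to an allocation $\pi(\theta')\in\{0,1\}^n$ and payments $p(\theta')\in\mathbb{R}^n$. Utility: $u_i(\theta')=v_i\pi_i(\theta')-p_i(\theta')$ (true valuation).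 Priority rule: each buyer $i$ is given a priority $\sigma_i$ that is a function of its reported neighbour set $r'_i$ only (e.g. $\sigma_i=|r'_i|$), independent of all reported valuations and non-decreasing with respect to inclusion of $r'_i$; ties are broken by a fixed total order on buyers. MUDAN, run on a reported profile $\theta'$. It maintains an explored set $A\subseteq B$, a winner set $W\subseteq A$, remaining supply $m'=m-|W|$, and tentative payments. For current $A,W$ the potential-winner set $P(A,W)$ is: $P=A$ if $|A\setminus W|\le m'$; otherwise $P=W\cup\{$the $m'$ buyers of $A\setminus W$ with highest reported valuations$\}$ (ties broken by a fixed total order). Buyers in $A\setminus P$ are called exhausted. Initialise $A=r_s$, $W=\varnothing$, and repeat: (1) Closure: while some buyer $x\in W\cup(A\setminus P(A,W))$ (with $P$ recomputed from the current $A,W$) has $r'_x\not\subseteq A$, set $A\leftarrow A\cup r'_x$. (2) Let $P=P(A,W)$; if $P\setminus W=\varnothing$, stop. (3) Let $w$ be the buyer of $P\setminus W$ with highest priority; set its tentative payment $\hat p_w$ to the $(m'+1)$-th highest reported valuation in $A\setminus W$ (current $m'$, before adding $w$), or $0$ if $|A\setminus W|\le m'$; add $w$ to $W$. Output: every $w\in W$ gets $\pi_w=1$, $p_w=\hat p_w$; every other buyer gets $\pi_i=0$, $p_i=0$. *)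

theory Defs
  imports Complex_Main "HOL-Library.While_Combinator"
begin

(* Buyers are the elements of a finite linearly ordered type 'b; the linear order
   of the type is the fixed total order used for all tie-breaking
   (smaller buyer wins ties). *)
type_synonym 'b profile = "'b \<Rightarrow> real \<times> 'b set"

(* Buyers reachable from the seller s in the profile graph G_theta;
   rs is the seller's (public) neighbour set. *)
inductive_set reach :: "'b set \<Rightarrow> 'b profile \<Rightarrow> 'b set" for rs \<theta> where
  seller: "x \<in> rs \<Longrightarrow> x \<in> reach rs \<theta>"
| step: "x \<in> reach rs \<theta> \<Longrightarrow> y \<in> snd (\<theta> x) \<Longrightarrow> y \<in> reach rs \<theta>"

definition silence :: "'b set \<Rightarrow> 'b profile \<Rightarrow> 'b profile" where
  "silence rs \<theta> = (\<lambda>j. if j \<in> reach rs \<theta> then \<theta> j else (0, {}))"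

definition val_beats :: "('b::linorder \<Rightarrow> real) \<Rightarrow> 'b \<Rightarrow> 'b \<Rightarrow> bool" where
  "val_beats v x y \<longleftrightarrow> v x > v y \<or> (v x = v y \<and> x < y)"

definition top_k :: "('b::linorder \<Rightarrow> real) \<Rightarrow> 'b set \<Rightarrow> nat \<Rightarrow> 'b set" where
  "top_k v S k = {x \<in> S. card {y \<in> S. val_beats v y x} < k}"

definition potential :: "nat \<Rightarrow> ('b::linorder \<Rightarrow> real) \<Rightarrow> 'b set \<Rightarrow> 'b set \<Rightarrow> 'b set" where
  "potential m v A W =
     (let m' = m - card W in
      if card (A - W) \<le> m' then A else W \<union> top_k v (A - W) m')"

definition clos_cond :: "nat \<Rightarrow> ('b::linorder \<Rightarrow> real) \<Rightarrow> ('b \<Rightarrow> 'b set) \<Rightarrow> 'b set \<Rightarrow> 'b set \<Rightarrow> bool" where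
  "clos_cond m v r W A \<longleftrightarrow> (\<exists>x \<in> W \<union> (A - potential m v A W). \<not> r x \<subseteq> A)"

definition clos_step :: "nat \<Rightarrow> ('b::linorder \<Rightarrow> real) \<Rightarrow> ('b \<Rightarrow> 'b set) \<Rightarrow> 'b set \<Rightarrow> 'b set \<Rightarrow> 'b set" where
  "clos_step m v r W A = A \<union> r (Min {x \<in> W \<union> (A - potential m v A W). \<not> r x \<subseteq> A})"

definition closure :: "nat \<Rightarrow> ('b::linorder \<Rightarrow> real) \<Rightarrow> ('b \<Rightarrow> 'b set) \<Rightarrow> 'b set \<Rightarrow> 'b set \<Rightarrow> 'b set" where
  "closure m v r A W = while (clos_cond m v r W) (clos_step m v r W) A"

(* tentative payment: (m'+1)-th highest reported valuation in A - W, or 0 if |A - W| \<le> m' *)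
definition price :: "nat \<Rightarrow> ('b::linorder \<Rightarrow> real) \<Rightarrow> 'b set \<Rightarrow> 'b set \<Rightarrow> real" where
  "price m v A W =
     (let m' = m - card W in
      if card (A - W) \<le> m' then 0
      else rev (sort (map v (sorted_list_of_set (A - W)))) ! m')"

definition prio_beats :: "('b set \<Rightarrow> 'p::linorder) \<Rightarrow> ('b::linorder \<Rightarrow> 'b set) \<Rightarrow> 'b \<Rightarrow> 'b \<Rightarrow> bool" where
  "prio_beats \<sigma> r x y \<longleftrightarrow> \<sigma> (r x) > \<sigma> (r y) \<or> (\<sigma> (r x) = \<sigma> (r y) \<and> x < y)"

definition pick :: "('b set \<Rightarrow> 'p::linorder) \<Rightarrow> ('b::linorder \<Rightarrow> 'b set) \<Rightarrow> 'b set \<Rightarrow> 'b" where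
  "pick \<sigma> r S = (THE w. w \<in> S \<and> (\<forall>y \<in> S. y \<noteq> w \<longrightarrow> prio_beats \<sigma> r w y))"

(* main loop; state = (A, W, tentative payments) *)
definition mudan_cond :: "nat \<Rightarrow> ('b::linorder \<Rightarrow> real) \<Rightarrow> ('b \<Rightarrow> 'b set)
    \<Rightarrow> 'b set \<times> 'b set \<times> ('b \<Rightarrow> real) \<Rightarrow> bool" where
  "mudan_cond m v r st =
     (case st of (A, W, p) \<Rightarrow> potential m v (closure m v r A W) W - W \<noteq> {})"

definition mudan_step :: "nat \<Rightarrow> ('b set \<Rightarrow> 'p::linorder) \<Rightarrow> ('b::linorder \<Rightarrow> real) \<Rightarrow> ('b \<Rightarrow> 'b set)
    \<Rightarrow> 'b set \<times> 'b set \<times> ('b \<Rightarrow> real) \<Rightarrow> 'b set \<times> 'b set \<times> ('b \<Rightarrow> real)" where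
  "mudan_step m \<sigma> v r st =
     (case st of (A, W, p) \<Rightarrow>
        let A' = closure m v r A W;
            w = pick \<sigma> r (potential m v A' W - W)
        in (A', insert w W, p(w := price m v A' W)))"

definition mudan_run :: "nat \<Rightarrow> ('b set \<Rightarrow> 'p::linorder) \<Rightarrow> 'b set \<Rightarrow> 'b::linorder profile
    \<Rightarrow> 'b set \<times> 'b set \<times> ('b \<Rightarrow> real)" where
  "mudan_run m \<sigma> rs \<theta>' =
     while (mudan_cond m (\<lambda>j. fst (\<theta>' j)) (\<lambda>j. snd (\<theta>' j)))
           (mudan_step m \<sigma> (\<lambda>j. fst (\<theta>' j)) (\<lambda>j. snd (\<theta>' j)))
           (rs, {}, \<lambda>_. 0)"

definition alloc :: "nat \<Rightarrow> ('b set \<Rightarrow> 'p::linorder) \<Rightarrow> 'b set \<Rightarrow> 'b::linorder profile \<Rightarrow> 'b \<Rightarrow> bool" where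
  "alloc m \<sigma> rs \<theta>' i \<longleftrightarrow> i \<in> fst (snd (mudan_run m \<sigma> rs (silence rs \<theta>')))"

definition payment :: "nat \<Rightarrow> ('b set \<Rightarrow> 'p::linorder) \<Rightarrow> 'b set \<Rightarrow> 'b::linorder profile \<Rightarrow> 'b \<Rightarrow> real" where
  "payment m \<sigma> rs \<theta>' i =
     (if alloc m \<sigma> rs \<theta>' i then snd (snd (mudan_run m \<sigma> rs (silence rs \<theta>'))) i else 0)"

definition utility :: "nat \<Rightarrow> ('b set \<Rightarrow> 'p::linorder) \<Rightarrow> 'b set \<Rightarrow> 'b::linorder profile
    \<Rightarrow> 'b \<Rightarrow> 'b profile \<Rightarrow> real" where
  "utility m \<sigma> rs \<theta> i \<theta>' =
     fst (\<theta> i) * (if alloc m \<sigma> rs \<theta>' i then 1 else 0) - payment m \<sigma> rs \<theta>' i"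

end

theory Submission
  imports Defs
begin

text \<open>Consider a deviation under which buyer \<open>i\<close> wins at a price below its true value, and run
  MUDAN on the truthful report alongside it. The price at any moment is the highest bid among the
  exhausted buyers; it only grows along a run, and a buyer that eventually wins is never exhausted
  before it is selected. So until \<open>i\<close> is selected it is a potential winner bidding above the
  current price, and raising its bid to the true value changes neither the potential winners nor
  the price. Since \<open>i\<close> is neither a winner nor exhausted, its neighbour set is never explored and
  the closures coincide; and since a larger neighbour set only raises its priority, every other
  selection coincides as well. Hence the truthful run selects \<open>i\<close> no later and at a price no
  higher. Otherwise the deviation yields utility at most \<open>0\<close>, whereas truthful utility is
  nonnegative because no buyer is charged more than its bid.\<close>

section \<open>Ranking by valuation\<close>

lemma val_beats_irrefl [simp]: "\<not> val_beats v x x"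
  by (simp add: val_beats_def)

lemma val_beats_trans: "val_beats v x y \<Longrightarrow> val_beats v y z \<Longrightarrow> val_beats v x z"
  by (auto simp: val_beats_def)

lemma val_beats_total: "x \<noteq> y \<Longrightarrow> val_beats v x y \<or> val_beats v y x"
  by (auto simp: val_beats_def neq_iff)

definition val_rank :: "('b::linorder \<Rightarrow> real) \<Rightarrow> 'b set \<Rightarrow> 'b \<Rightarrow> nat" where
  "val_rank v S x = card {y \<in> S. val_beats v y x}"

lemma top_k_eq_val_rank: "top_k v S k = {x \<in> S. val_rank v S x < k}"
  by (simp add: top_k_def val_rank_def)

lemma val_rank_less:
  fixes S :: "'b::{finite,linorder} set"
  assumes "x \<in> S" "val_beats v x y"
  shows "val_rank v S x < val_rank v S y"
proof -
  have "x \<in> {z \<in> S. val_beats v z y} - {z \<in> S. val_beats v z x}"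
    using assms by simp
  then have "{z \<in> S. val_beats v z x} \<subset> {z \<in> S. val_beats v z y}"
    using assms val_beats_trans[of v _ x y] by blast
  then show ?thesis
    unfolding val_rank_def by (simp add: psubset_card_mono)
qed

lemma val_beats_if_val_rank_less:
  fixes S :: "'b::{finite,linorder} set"
  assumes "x \<in> S" "y \<in> S" "val_rank v S x < val_rank v S y"
  shows "val_beats v x y"
  using assms val_beats_total[of x y v] val_rank_less[of y S v x] by (cases "x = y") auto

lemma val_rank_mono:
  fixes S :: "'b::{finite,linorder} set"
  shows "S \<subseteq> T \<Longrightarrow> val_rank v S x \<le> val_rank v T x"
  unfolding val_rank_def by (intro card_mono) auto

lemma val_rank_cong:
  assumes "\<And>y. y \<in> S \<Longrightarrow> v1 y = v2 y" "x \<in> S"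
  shows "val_rank v1 S x = val_rank v2 S x"
proof -
  have "{y \<in> S. val_beats v1 y x} = {y \<in> S. val_beats v2 y x}"
    using assms by (auto simp: val_beats_def)
  then show ?thesis by (simp add: val_rank_def)
qed

lemma card_val_rank_less_le:
  fixes S :: "'b::{finite,linorder} set"
  shows "card {x \<in> S. val_rank v S x < k} \<le> k"
proof -
  have "inj_on (val_rank v S) S"
  proof (rule inj_onI)
    fix x y assume "x \<in> S" "y \<in> S" "val_rank v S x = val_rank v S y"
    then show "x = y"
      using val_rank_less[of x S v y] val_rank_less[of y S v x] val_beats_total[of x y v] by force
  qed
  then have "card {x \<in> S. val_rank v S x < k} = card (val_rank v S ` {x \<in> S. val_rank v S x < k})"
    by (simp add: card_image inj_on_subset)
  also have "\<dots> \<le> card {..<k}"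
    by (intro card_mono) auto
  finally show ?thesis by simp
qed

lemma val_rank_remove:
  fixes S :: "'b::{finite,linorder} set"
  assumes "w \<in> S"
  shows "val_rank v (S - {w}) x = val_rank v S x - (if val_beats v w x then 1 else 0)"
proof -
  have "{y \<in> S - {w}. val_beats v y x} = {y \<in> S. val_beats v y x} - {w}" by auto
  then show ?thesis
    using assms by (simp add: val_rank_def)
qed

text \<open>The updated buyer is the only one that can newly overtake \<open>x\<close>.\<close>

lemma val_rank_less_update_other:
  fixes S :: "'b::{finite,linorder} set"
  assumes agree: "\<And>j. j \<noteq> i \<Longrightarrow> v1 j = v2 j"
    and "i \<in> S" "x \<in> S" "x \<noteq> i" "val_rank v1 S i < k" "val_rank v1 S x < k"
  shows "val_rank v2 S x < k"
proof -
  have beats: "val_beats v1 y x" if "val_beats v2 y x" "y \<noteq> i" for y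
    using that agree[of y] agree[of x] assms(4) by (simp add: val_beats_def)
  show ?thesis
  proof (cases "val_beats v1 i x")
    case True
    then have "{y \<in> S. val_beats v2 y x} \<subseteq> {y \<in> S. val_beats v1 y x}"
      using beats by auto
    then have "val_rank v2 S x \<le> val_rank v1 S x"
      unfolding val_rank_def by (intro card_mono) auto
    then show ?thesis using assms(6) by simp
  next
    case False
    then have "val_rank v1 S x < val_rank v1 S i"
      using val_rank_less val_beats_total assms(3,4) by blast
    have "{y \<in> S. val_beats v2 y x} \<subseteq> insert i {y \<in> S. val_beats v1 y x}"
      using beats by auto
    then have "val_rank v2 S x \<le> card (insert i {y \<in> S. val_beats v1 y x})"
      unfolding val_rank_def by (intro card_mono) auto
    also have "\<dots> \<le> Suc (val_rank v1 S x)"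
      unfolding val_rank_def by (rule card_insert_le_m1) auto
    finally show ?thesis
      using \<open>val_rank v1 S x < val_rank v1 S i\<close> assms(5) by simp
  qed
qed

lemma sorted_nth_eqI:
  fixes zs :: "'a::linorder list"
  assumes "sorted zs" "j < length zs"
    and "length (filter (\<lambda>x. x < a) zs) \<le> j" "j < length (filter (\<lambda>x. x \<le> a) zs)"
  shows "zs ! j = a"
proof (rule ccontr)
  assume ne: "zs ! j \<noteq> a"
  show False
  proof (cases "zs ! j < a")
    case True
    have "{0..j} \<subseteq> {k. k < length zs \<and> zs ! k < a}"
      using True assms(1,2) sorted_nth_mono[of zs _ j] by fastforce
    then have "card {0..j} \<le> card {k. k < length zs \<and> zs ! k < a}"
      by (intro card_mono) auto
    then show False
      using assms(3) by (simp add: length_filter_conv_card)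
  next
    case False
    have "{k. k < length zs \<and> zs ! k \<le> a} \<subseteq> {0..<j}"
      using False ne assms(1) sorted_nth_mono[of zs j] by (fastforce simp: not_le)
    then have "card {k. k < length zs \<and> zs ! k \<le> a} \<le> card {0..<j}"
      by (intro card_mono) auto
    then show False
      using assms(4) by (simp add: length_filter_conv_card)
  qed
qed

lemma length_filter_sort_map_set:
  fixes S :: "'b::{finite,linorder} set"
  shows "length (filter P (sort (map v (sorted_list_of_set S)))) = card {x \<in> S. P (v x)}"
proof -
  have "length (filter P (sort (map v (sorted_list_of_set S))))
      = length (filter (P \<circ> v) (sorted_list_of_set S))"
    by (simp add: filter_sort filter_map)
  also have "\<dots> = card (set (filter (P \<circ> v) (sorted_list_of_set S)))"
    by (simp add: distinct_card[symmetric])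
  finally show ?thesis
    by (simp add: Collect_conj_eq Int_commute)
qed

lemma val_rank_ge_nonempty:
  fixes S :: "'b::{finite,linorder} set"
  assumes "k < card S"
  shows "{x \<in> S. k \<le> val_rank v S x} \<noteq> {}"
proof
  assume "{x \<in> S. k \<le> val_rank v S x} = {}"
  then have "S = {x \<in> S. val_rank v S x < k}" by auto
  then show False
    using assms card_val_rank_less_le[where S=S and v=v and k=k] by simp
qed

lemma nth_largest_eq_Max:
  fixes S :: "'b::{finite,linorder} set"
  assumes "k < card S"
  shows "rev (sort (map v (sorted_list_of_set S))) ! k = Max (v ` {x \<in> S. k \<le> val_rank v S x})"
proof -
  let ?N = "{x \<in> S. k \<le> val_rank v S x}"
  let ?zs = "sort (map v (sorted_list_of_set S))"
  define M where "M = Max (v ` ?N)"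
  have split: "card {x \<in> S. P x} + card {x \<in> S. \<not> P x} = card S" for P
    using card_Int_Diff[of S "{x. P x}"] by (simp add: Int_def set_diff_eq add.commute)
  have "M \<in> v ` ?N"
    unfolding M_def using val_rank_ge_nonempty[OF assms, of v] by (intro Max_in) auto
  then obtain e where e: "e \<in> ?N" "v e = M" by blast
  have below_M: "v x \<le> M" if "x \<in> ?N" for x
    using that unfolding M_def by simp
  have "insert e {y \<in> S. val_beats v y e} \<subseteq> {x \<in> S. \<not> v x < M}"
    using e by (auto simp: val_beats_def)
  then have "card (insert e {y \<in> S. val_beats v y e}) \<le> card {x \<in> S. \<not> v x < M}"
    by (intro card_mono) auto
  moreover have "card (insert e {y \<in> S. val_beats v y e}) = Suc (val_rank v S e)"
    by (simp add: val_rank_def)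
  ultimately have "Suc k \<le> card {x \<in> S. \<not> v x < M}"
    using e(1) by simp
  then have less: "card {x \<in> S. v x < M} \<le> card S - Suc k"
    using split[of "\<lambda>x. v x < M"] by linarith
  have "{x \<in> S. \<not> v x \<le> M} \<subseteq> {x \<in> S. val_rank v S x < k}"
    using below_M by (auto simp: not_less[symmetric])
  then have "card {x \<in> S. \<not> v x \<le> M} \<le> card {x \<in> S. val_rank v S x < k}"
    by (intro card_mono) auto
  then have "card {x \<in> S. \<not> v x \<le> M} \<le> k"
    using card_val_rank_less_le[where S=S and v=v and k=k] by linarith
  then have le: "card S - Suc k < card {x \<in> S. v x \<le> M}"
    using split[of "\<lambda>x. v x \<le> M"] assms by linarith
  have "?zs ! (card S - Suc k) = M"
    by (rule sorted_nth_eqI) (use assms less le in \<open>simp_all add: length_filter_sort_map_set\<close>)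
  then show ?thesis
    using assms by (simp add: rev_nth M_def)
qed

section \<open>Potential winners, exhausted buyers and prices\<close>

definition exhausted :: "nat \<Rightarrow> ('b::linorder \<Rightarrow> real) \<Rightarrow> 'b set \<Rightarrow> 'b set \<Rightarrow> 'b set" where
  "exhausted m v A W = A - potential m v A W"

lemma potential_eq_val_rank:
  "potential m v A W =
    (if card (A - W) \<le> m - card W then A
     else W \<union> {x \<in> A - W. val_rank v (A - W) x < m - card W})"
  by (simp add: potential_def top_k_eq_val_rank Let_def)

lemma exhausted_eq_val_rank:
  "exhausted m v A W =
    (if card (A - W) \<le> m - card W then {}
     else {x \<in> A - W. m - card W \<le> val_rank v (A - W) x})"
  by (auto simp: exhausted_def potential_eq_val_rank)

lemma potential_diff_subset: "potential m v A W - W \<subseteq> A - W"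
  by (auto simp: potential_eq_val_rank)

lemma val_rank_less_if_potential:
  "x \<in> potential m v A W - W \<Longrightarrow> \<not> card (A - W) \<le> m - card W \<Longrightarrow>
    val_rank v (A - W) x < m - card W"
  by (auto simp: potential_eq_val_rank)

lemma exhausted_empty_iff:
  fixes A :: "'b::{finite,linorder} set"
  shows "exhausted m v A W = {} \<longleftrightarrow> card (A - W) \<le> m - card W"
  using val_rank_ge_nonempty[of "m - card W" "A - W" v] by (auto simp: exhausted_eq_val_rank)

lemma price_eq_Max_exhausted:
  fixes A :: "'b::{finite,linorder} set"
  shows "price m v A W =
    (if exhausted m v A W = {} then 0 else Max (v ` exhausted m v A W))"
proof (cases "card (A - W) \<le> m - card W")
  case True
  then show ?thesis by (simp add: price_def exhausted_empty_iff)
next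
  case False
  have "exhausted m v A W = {x \<in> A - W. m - card W \<le> val_rank v (A - W) x}"
    using False by (simp add: exhausted_eq_val_rank)
  then show ?thesis
    unfolding exhausted_empty_iff
    using False nth_largest_eq_Max[of "m - card W" "A - W" v] by (simp add: price_def Let_def)
qed

lemma price_nonneg:
  fixes A :: "'b::{finite,linorder} set"
  assumes "\<And>x. v x \<ge> 0"
  shows "price m v A W \<ge> 0"
proof (cases "exhausted m v A W = {}")
  case False
  then obtain e where "e \<in> exhausted m v A W" by blast
  then have "v e \<le> Max (v ` exhausted m v A W)" by simp
  then show ?thesis
    using False assms[of e] by (simp add: price_eq_Max_exhausted)
qed (simp add: price_eq_Max_exhausted)

lemma candidate_beats_exhausted:
  fixes A :: "'b::{finite,linorder} set"
  assumes "x \<in> potential m v A W - W" "e \<in> exhausted m v A W"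
  shows "val_beats v x e"
proof -
  have "\<not> card (A - W) \<le> m - card W"
    using assms(2) exhausted_empty_iff by blast
  then have x: "x \<in> A - W" "val_rank v (A - W) x < m - card W"
    and e: "e \<in> A - W" "m - card W \<le> val_rank v (A - W) e"
    using assms potential_diff_subset[of m v A W] val_rank_less_if_potential[OF assms(1)]
    by (auto simp: exhausted_eq_val_rank)
  show ?thesis
    using val_beats_if_val_rank_less[OF x(1) e(1)] x(2) e(2) by simp
qed

lemma price_le_candidate:
  fixes A :: "'b::{finite,linorder} set"
  assumes "\<And>x. v x \<ge> 0" "x \<in> potential m v A W - W"
  shows "price m v A W \<le> v x"
proof (cases "exhausted m v A W = {}")
  case False
  have "v e \<le> v x" if "e \<in> exhausted m v A W" for e
    using candidate_beats_exhausted[OF assms(2) that] by (auto simp: val_beats_def)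
  then show ?thesis
    using False by (simp add: price_eq_Max_exhausted)
qed (use assms(1) in \<open>simp add: price_eq_Max_exhausted\<close>)

lemma exhausted_mono:
  fixes A :: "'b::{finite,linorder} set"
  assumes "A \<subseteq> B"
  shows "exhausted m v A W \<subseteq> exhausted m v B W"
proof (cases "card (A - W) \<le> m - card W")
  case True
  then show ?thesis by (simp add: exhausted_eq_val_rank)
next
  case False
  have "card (A - W) \<le> card (B - W)"
    using assms by (intro card_mono) auto
  moreover have "val_rank v (A - W) x \<le> val_rank v (B - W) x" for x
    using assms by (intro val_rank_mono) auto
  ultimately show ?thesis
    using False assms by (auto simp: exhausted_eq_val_rank intro: order_trans)
qed

lemma price_mono:
  fixes A :: "'b::{finite,linorder} set"
  assumes "A \<subseteq> B" "\<And>x. v x \<ge> 0"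
  shows "price m v A W \<le> price m v B W"
proof (cases "exhausted m v A W = {}")
  case True
  have "price m v B W \<ge> 0"
    by (rule price_nonneg[OF assms(2)])
  then show ?thesis
    using True by (simp add: price_eq_Max_exhausted)
next
  case False
  have sub: "exhausted m v A W \<subseteq> exhausted m v B W"
    by (rule exhausted_mono[OF assms(1)])
  then have "Max (v ` exhausted m v A W) \<le> Max (v ` exhausted m v B W)"
    using False by (intro Max_mono) auto
  then show ?thesis
    using False sub by (auto simp: price_eq_Max_exhausted)
qed

text \<open>Selecting a potential winner shrinks both \<open>A - W\<close> and the remaining supply by one, and
  the selected buyer was ranked above every exhausted one.\<close>

lemma exhausted_insert_candidate:
  fixes A :: "'b::{finite,linorder} set"
  assumes w: "w \<in> potential m v A W - W"
  shows "exhausted m v A (insert w W) = exhausted m v A W"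
proof -
  let ?S = "A - W" and ?k = "m - card W"
  have wS: "w \<in> ?S" "w \<notin> W" and S': "A - insert w W = ?S - {w}"
    using w by (auto simp: potential_eq_val_rank split: if_splits)
  have cards: "card (A - insert w W) = card ?S - 1" "m - card (insert w W) = ?k - 1"
    using wS S' by auto
  show ?thesis
  proof (cases "card ?S \<le> ?k")
    case True
    then have "card (A - insert w W) \<le> m - card (insert w W)"
      using cards by linarith
    then show ?thesis
      using True by (simp only: exhausted_eq_val_rank if_True)
  next
    case False
    have rw: "val_rank v ?S w < ?k"
      using val_rank_less_if_potential[OF w False] .
    have shift: "?k - 1 \<le> val_rank v (?S - {w}) x \<longleftrightarrow> ?k \<le> val_rank v ?S x"
      if "x \<in> ?S - {w}" for x
    proof (cases "val_beats v w x")
      case True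
      then have "val_rank v (?S - {w}) x = val_rank v ?S x - 1"
        by (simp add: val_rank_remove[OF wS(1)])
      then show ?thesis
        using val_rank_less[of w ?S v x] True wS rw by linarith
    next
      case False
      then have "val_rank v ?S x < val_rank v ?S w"
        using that val_beats_total[of w x v] val_rank_less[of x ?S v w] by auto
      then show ?thesis
        using False rw by (simp add: val_rank_remove[OF wS(1)])
    qed
    have "{x \<in> ?S - {w}. ?k - 1 \<le> val_rank v (?S - {w}) x} = {x \<in> ?S - {w}. ?k \<le> val_rank v ?S x}"
      using shift by blast
    also have "\<dots> = {x \<in> ?S. ?k \<le> val_rank v ?S x}"
      using rw by auto
    finally have "{x \<in> ?S - {w}. ?k - 1 \<le> val_rank v (?S - {w}) x} = {x \<in> ?S. ?k \<le> val_rank v ?S x}" .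
    moreover have "\<not> card (A - insert w W) \<le> m - card (insert w W)"
      using cards False rw by linarith
    ultimately show ?thesis
      using False by (simp only: exhausted_eq_val_rank S' cards(2) if_False)
  qed
qed

lemma price_insert_candidate:
  fixes A :: "'b::{finite,linorder} set"
  shows "w \<in> potential m v A W - W \<Longrightarrow> price m v A (insert w W) = price m v A W"
  by (simp add: price_eq_Max_exhausted exhausted_insert_candidate)

lemma potential_price_cong:
  fixes A :: "'b::{finite,linorder} set"
  assumes "\<And>x. x \<in> A - W \<Longrightarrow> v1 x = v2 x"
  shows "potential m v1 A W = potential m v2 A W" and "price m v1 A W = price m v2 A W"
proof -
  show "potential m v1 A W = potential m v2 A W"
    using val_rank_cong[of "A - W" v1 v2] assms by (auto simp: potential_eq_val_rank)
  have valuations: "map v1 (sorted_list_of_set (A - W)) = map v2 (sorted_list_of_set (A - W))"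
    using assms by (intro map_cong) auto
  show "price m v1 A W = price m v2 A W"
    unfolding price_def valuations ..
qed

lemma potential_price_rebid:
  fixes A :: "'b::{finite,linorder} set"
  assumes agree: "\<And>j. j \<noteq> i \<Longrightarrow> v1 j = v2 j"
    and i: "i \<in> potential m v1 A W - W" and bid: "price m v1 A W < v2 i"
  shows "potential m v2 A W = potential m v1 A W" and "price m v2 A W = price m v1 A W"
proof -
  let ?S = "A - W" and ?k = "m - card W"
  have "potential m v2 A W = potential m v1 A W \<and> price m v2 A W = price m v1 A W"
  proof (cases "card ?S \<le> ?k")
    case True
    then show ?thesis by (simp add: potential_eq_val_rank price_def)
  next
    case False
    let ?E = "exhausted m v1 A W"
    have E: "?E = {x \<in> ?S. ?k \<le> val_rank v1 ?S x}"
      using False by (simp add: exhausted_eq_val_rank)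
    have "?E \<noteq> {}"
      using False exhausted_empty_iff by blast
    have r1: "val_rank v1 ?S i < ?k" and iS: "i \<in> ?S"
      using val_rank_less_if_potential[OF i False] i potential_diff_subset[of m v1 A W] by auto
    have "{y \<in> ?S. val_beats v2 y i} \<subseteq> {y \<in> ?S. val_rank v1 ?S y < ?k} - {i}"
    proof
      fix y assume y: "y \<in> {y \<in> ?S. val_beats v2 y i}"
      then have "y \<noteq> i" and "v2 y \<ge> v2 i"
        by (auto simp: val_beats_def)
      then have "v1 y \<ge> v2 i"
        using agree by simp
      then have "y \<notin> ?E"
        using bid \<open>?E \<noteq> {}\<close> by (auto simp: price_eq_Max_exhausted)
      then show "y \<in> {y \<in> ?S. val_rank v1 ?S y < ?k} - {i}"
        using y \<open>y \<noteq> i\<close> E(1) by auto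
    qed
    then have "val_rank v2 ?S i \<le> card ({y \<in> ?S. val_rank v1 ?S y < ?k} - {i})"
      unfolding val_rank_def by (intro card_mono) auto
    also have "\<dots> \<le> ?k - 1"
      using iS r1 card_val_rank_less_le[where S="?S" and v=v1 and k="?k"] by simp
    finally have r2: "val_rank v2 ?S i < ?k"
      using r1 by linarith
    have agree': "\<And>j. j \<noteq> i \<Longrightarrow> v2 j = v1 j"
      using agree by metis
    have top: "val_rank v1 ?S x < ?k \<longleftrightarrow> val_rank v2 ?S x < ?k" if "x \<in> ?S" for x
    proof (cases "x = i")
      case False
      then show ?thesis
        using val_rank_less_update_other[OF agree iS that False r1]
          val_rank_less_update_other[OF agree' iS that False r2] by blast
    qed (use r1 r2 in simp)
    have pot: "potential m v2 A W = potential m v1 A W"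
      using False top by (auto simp: potential_eq_val_rank)
    then have "exhausted m v2 A W = ?E"
      by (simp add: exhausted_def)
    moreover have "v2 x = v1 x" if "x \<in> ?E" for x
      using that r1 E agree[of x] by (cases "x = i") auto
    then have "v2 ` ?E = v1 ` ?E"
      by (rule image_cong[OF refl])
    ultimately have "price m v2 A W = price m v1 A W"
      using \<open>?E \<noteq> {}\<close> by (simp add: price_eq_Max_exhausted)
    with pot show ?thesis ..
  qed
  then show "potential m v2 A W = potential m v1 A W" "price m v2 A W = price m v1 A W"
    by auto
qed

section \<open>Closure and selection\<close>

definition clos_closed :: "nat \<Rightarrow> ('b::linorder \<Rightarrow> real) \<Rightarrow> ('b \<Rightarrow> 'b set) \<Rightarrow> 'b set \<Rightarrow> 'b set \<Rightarrow> bool" where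
  "clos_closed m v r W A \<longleftrightarrow> (\<forall>x \<in> W \<union> exhausted m v A W. r x \<subseteq> A)"

lemma clos_closed_cong:
  assumes "exhausted m v1 A W = exhausted m v2 A W"
    and "\<And>x. x \<in> W \<union> exhausted m v1 A W \<Longrightarrow> r1 x = r2 x"
  shows "clos_closed m v1 r1 W A \<longleftrightarrow> clos_closed m v2 r2 W A"
  using assms by (auto simp: clos_closed_def)

lemma clos_step_adds_neighbours:
  fixes Y :: "'b::{finite,linorder} set"
  assumes "clos_cond m v r W Y"
  obtains x where "x \<in> W \<union> exhausted m v Y W" "\<not> r x \<subseteq> Y"
    and "clos_step m v r W Y = Y \<union> r x"
proof -
  let ?D = "{x \<in> W \<union> (Y - potential m v Y W). \<not> r x \<subseteq> Y}"
  have "Min ?D \<in> ?D"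
    using assms by (intro Min_in) (auto simp: clos_cond_def)
  then show ?thesis
    using that by (auto simp: clos_step_def exhausted_def)
qed

text \<open>The closure step only ever adds neighbour sets that every closed superset already contains,
  so the loop computes the least closed superset of \<open>A\<close>.\<close>

lemma closure_least_closed:
  fixes A :: "'b::{finite,linorder} set"
  shows "A \<subseteq> closure m v r A W \<and> clos_closed m v r W (closure m v r A W) \<and>
    (\<forall>X. A \<subseteq> X \<and> clos_closed m v r W X \<longrightarrow> closure m v r A W \<subseteq> X)"
  unfolding closure_def
proof (rule while_rule[where P = "\<lambda>Y. A \<subseteq> Y \<and> (\<forall>X. A \<subseteq> X \<and> clos_closed m v r W X \<longrightarrow> Y \<subseteq> X)"
      and r = "measure (\<lambda>Y. card (UNIV - Y))"])
  show "A \<subseteq> A \<and> (\<forall>X. A \<subseteq> X \<and> clos_closed m v r W X \<longrightarrow> A \<subseteq> X)"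
    by blast
next
  fix Y assume P: "A \<subseteq> Y \<and> (\<forall>X. A \<subseteq> X \<and> clos_closed m v r W X \<longrightarrow> Y \<subseteq> X)"
    and cond: "clos_cond m v r W Y"
  obtain x where x: "x \<in> W \<union> exhausted m v Y W" "clos_step m v r W Y = Y \<union> r x"
    using cond by (rule clos_step_adds_neighbours)
  have "Y \<union> r x \<subseteq> X" if "A \<subseteq> X" "clos_closed m v r W X" for X
  proof -
    have "Y \<subseteq> X" using P that by blast
    then have "x \<in> W \<union> exhausted m v X W"
      using x(1) exhausted_mono[of Y X m v W] by blast
    then show ?thesis
      using that(2) \<open>Y \<subseteq> X\<close> by (auto simp: clos_closed_def)
  qed
  then show "A \<subseteq> clos_step m v r W Y \<and>
      (\<forall>X. A \<subseteq> X \<and> clos_closed m v r W X \<longrightarrow> clos_step m v r W Y \<subseteq> X)"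
    using P x(2) by auto
next
  fix Y assume "A \<subseteq> Y \<and> (\<forall>X. A \<subseteq> X \<and> clos_closed m v r W X \<longrightarrow> Y \<subseteq> X)"
    and "\<not> clos_cond m v r W Y"
  then show "A \<subseteq> Y \<and> clos_closed m v r W Y \<and> (\<forall>X. A \<subseteq> X \<and> clos_closed m v r W X \<longrightarrow> Y \<subseteq> X)"
    by (auto simp: clos_cond_def clos_closed_def exhausted_def)
next
  show "wf (measure (\<lambda>Y. card (UNIV - Y)))"
    by simp
next
  fix Y assume "clos_cond m v r W Y"
  then obtain x where "\<not> r x \<subseteq> Y" "clos_step m v r W Y = Y \<union> r x"
    by (rule clos_step_adds_neighbours)
  then have "UNIV - clos_step m v r W Y \<subset> UNIV - Y"
    by auto
  then show "(clos_step m v r W Y, Y) \<in> measure (\<lambda>Y. card (UNIV - Y))"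
    by (simp add: psubset_card_mono)
qed

lemma subset_closure: "(A :: 'b::{finite,linorder} set) \<subseteq> closure m v r A W"
  using closure_least_closed by blast

lemma clos_closed_closure: "clos_closed m v r W (closure m v r (A :: 'b::{finite,linorder} set) W)"
  using closure_least_closed by blast

lemma closure_least:
  "(A :: 'b::{finite,linorder} set) \<subseteq> X \<Longrightarrow> clos_closed m v r W X \<Longrightarrow> closure m v r A W \<subseteq> X"
  using closure_least_closed by blast

lemma closure_cong_closed:
  fixes A :: "'b::{finite,linorder} set"
  assumes agv: "\<And>x. x \<in> R \<Longrightarrow> v1 x = v2 x" and agr: "\<And>x. x \<in> R \<Longrightarrow> r1 x = r2 x"
    and closed: "\<And>x. x \<in> R \<Longrightarrow> r1 x \<subseteq> R" and "A \<subseteq> R" "W \<subseteq> R"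
  shows "closure m v1 r1 A W = closure m v2 r2 A W" and "closure m v1 r1 A W \<subseteq> R"
proof -
  have cong: "clos_closed m v1 r1 W X \<longleftrightarrow> clos_closed m v2 r2 W X" if "X \<subseteq> R" for X
  proof (rule clos_closed_cong)
    show "exhausted m v1 X W = exhausted m v2 X W"
      using potential_price_cong(1)[of X W v1 v2 m] agv that by (auto simp: exhausted_def)
    show "r1 x = r2 x" if "x \<in> W \<union> exhausted m v1 X W" for x
      using that agr \<open>X \<subseteq> R\<close> \<open>W \<subseteq> R\<close> by (auto simp: exhausted_def)
  qed
  have "clos_closed m v1 r1 W R"
    using closed \<open>W \<subseteq> R\<close> by (auto simp: clos_closed_def exhausted_def)
  then have C1: "closure m v1 r1 A W \<subseteq> R"
    using closure_least \<open>A \<subseteq> R\<close> by blast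
  have "clos_closed m v2 r2 W R"
    using cong \<open>clos_closed m v1 r1 W R\<close> by blast
  then have C2: "closure m v2 r2 A W \<subseteq> R"
    using closure_least \<open>A \<subseteq> R\<close> by blast
  have "closure m v2 r2 A W \<subseteq> closure m v1 r1 A W"
  proof (rule closure_least)
    show "clos_closed m v2 r2 W (closure m v1 r1 A W)"
      using cong[OF C1] clos_closed_closure by blast
  qed (rule subset_closure)
  moreover have "closure m v1 r1 A W \<subseteq> closure m v2 r2 A W"
  proof (rule closure_least)
    show "clos_closed m v1 r1 W (closure m v2 r2 A W)"
      using cong[OF C2] clos_closed_closure by blast
  qed (rule subset_closure)
  ultimately show "closure m v1 r1 A W = closure m v2 r2 A W" by blast
  show "closure m v1 r1 A W \<subseteq> R" by (fact C1)
qed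

lemma prio_beats_asym: "prio_beats \<sigma> r x y \<Longrightarrow> \<not> prio_beats \<sigma> r y x"
  by (auto simp: prio_beats_def)

lemma pick_eqI:
  assumes "w \<in> S" "\<And>y. y \<in> S \<Longrightarrow> y \<noteq> w \<Longrightarrow> prio_beats \<sigma> r w y"
  shows "pick \<sigma> r S = w"
  unfolding pick_def
proof (rule the_equality)
  fix z assume z: "z \<in> S \<and> (\<forall>y \<in> S. y \<noteq> z \<longrightarrow> prio_beats \<sigma> r z y)"
  show "z = w"
  proof (rule ccontr)
    assume "z \<noteq> w"
    then show False
      using z assms prio_beats_asym[of \<sigma> r z w] by auto
  qed
qed (use assms in blast)

lemma ex_highest_priority:
  fixes S :: "'b::{finite,linorder} set" and \<sigma> :: "'b set \<Rightarrow> 'p::linorder"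
  assumes "S \<noteq> {}"
  shows "\<exists>w \<in> S. \<forall>y \<in> S. y \<noteq> w \<longrightarrow> prio_beats \<sigma> r w y"
proof -
  define M where "M = Max ((\<lambda>x. \<sigma> (r x)) ` S)"
  define w where "w = Min {x \<in> S. \<sigma> (r x) = M}"
  have "M \<in> (\<lambda>x. \<sigma> (r x)) ` S"
    unfolding M_def using assms by (intro Max_in) auto
  then have "w \<in> {x \<in> S. \<sigma> (r x) = M}"
    unfolding w_def by (intro Min_in) auto
  moreover have "prio_beats \<sigma> r w y" if "y \<in> S" "y \<noteq> w" for y
  proof -
    have "\<sigma> (r y) \<le> M"
      using that by (simp add: M_def)
    moreover have "w \<le> y" if "\<sigma> (r y) = M"
      using that \<open>y \<in> S\<close> by (simp add: w_def)
    ultimately show ?thesis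
      using \<open>w \<in> {x \<in> S. \<sigma> (r x) = M}\<close> \<open>y \<noteq> w\<close> by (auto simp: prio_beats_def)
  qed
  ultimately show ?thesis
    by blast
qed

lemma pick_in:
  fixes S :: "'b::{finite,linorder} set" and \<sigma> :: "'b set \<Rightarrow> 'p::linorder"
  assumes "S \<noteq> {}"
  shows "pick \<sigma> r S \<in> S"
proof -
  obtain w where "w \<in> S" "\<forall>y \<in> S. y \<noteq> w \<longrightarrow> prio_beats \<sigma> r w y"
    using ex_highest_priority[OF assms] by blast
  then show ?thesis
    using pick_eqI[of w S \<sigma> r] by simp
qed

lemma pick_cong:
  fixes S :: "'b::{finite,linorder} set" and \<sigma> :: "'b set \<Rightarrow> 'p::linorder"
  assumes "\<And>x. x \<in> S \<Longrightarrow> r1 x = r2 x"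
  shows "pick \<sigma> r1 S = pick \<sigma> r2 S"
proof (cases "S = {}")
  case False
  then obtain w where "w \<in> S" "\<forall>y \<in> S. y \<noteq> w \<longrightarrow> prio_beats \<sigma> r1 w y"
    using ex_highest_priority by blast
  moreover have "\<forall>y \<in> S. y \<noteq> w \<longrightarrow> prio_beats \<sigma> r2 w y"
    using calculation assms by (auto simp: prio_beats_def)
  ultimately show ?thesis
    using pick_eqI[of w S \<sigma> r1] pick_eqI[of w S \<sigma> r2] by simp
qed (simp add: pick_def)

lemma pick_lower_priority:
  fixes S :: "'b::{finite,linorder} set" and \<sigma> :: "'b set \<Rightarrow> 'p::linorder"
  assumes agree: "\<And>j. j \<noteq> i \<Longrightarrow> rD j = rT j" and lower: "\<sigma> (rD i) \<le> \<sigma> (rT i)"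
    and "S \<noteq> {}" and not_i: "pick \<sigma> rT S \<noteq> i"
  shows "pick \<sigma> rD S = pick \<sigma> rT S"
proof -
  obtain w where w: "w \<in> S" "\<forall>y \<in> S. y \<noteq> w \<longrightarrow> prio_beats \<sigma> rT w y"
    using ex_highest_priority[OF \<open>S \<noteq> {}\<close>] by blast
  then have "pick \<sigma> rT S = w"
    using pick_eqI[of w S \<sigma> rT] by simp
  then have "rD w = rT w"
    using agree not_i by simp
  have "prio_beats \<sigma> rD w y" if "y \<in> S" "y \<noteq> w" for y
  proof (cases "y = i")
    case True
    then show ?thesis
      using w that lower \<open>rD w = rT w\<close> by (auto simp: prio_beats_def)
  next
    case False
    then show ?thesis
      using w that agree[of y] \<open>rD w = rT w\<close> by (simp add: prio_beats_def)
  qed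
  then show ?thesis
    using pick_eqI[of w S \<sigma> rD] w(1) \<open>pick \<sigma> rT S = w\<close> by simp
qed

section \<open>Runs of the main loop\<close>

definition mudan_from :: "nat \<Rightarrow> ('b set \<Rightarrow> 'p::linorder) \<Rightarrow> ('b::linorder \<Rightarrow> real) \<Rightarrow> ('b \<Rightarrow> 'b set)
    \<Rightarrow> 'b set \<times> 'b set \<times> ('b \<Rightarrow> real) \<Rightarrow> 'b set \<times> 'b set \<times> ('b \<Rightarrow> real)" where
  "mudan_from m \<sigma> v r = while (mudan_cond m v r) (mudan_step m \<sigma> v r)"

lemma mudan_from_stop:
  "potential m v (closure m v r A W) W - W = {} \<Longrightarrow> mudan_from m \<sigma> v r (A, W, p) = (A, W, p)"
  unfolding mudan_from_def by (subst while_unfold) (simp add: mudan_cond_def)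

lemma mudan_from_step:
  assumes "C = closure m v r A W" "w = pick \<sigma> r (potential m v C W - W)"
    and "w \<in> potential m v C W - W"
  shows "mudan_from m \<sigma> v r (A, W, p) = mudan_from m \<sigma> v r (C, insert w W, p(w := price m v C W))"
  unfolding mudan_from_def using assms
  by (subst while_unfold) (auto simp: mudan_cond_def mudan_step_def Let_def)

lemma mudan_from_induct [case_names stop step]:
  fixes v :: "'b::{finite,linorder} \<Rightarrow> real" and \<sigma> :: "'b set \<Rightarrow> 'p::linorder"
  assumes stop: "\<And>A W p. potential m v (closure m v r A W) W - W = {} \<Longrightarrow> P A W p"
    and step: "\<And>A W p C w. C = closure m v r A W \<Longrightarrow> w = pick \<sigma> r (potential m v C W - W) \<Longrightarrow>
      w \<in> potential m v C W - W \<Longrightarrow> P C (insert w W) (p(w := price m v C W)) \<Longrightarrow> P A W p"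
  shows "P A W p"
proof (induction "card (UNIV - W)" arbitrary: A W p rule: less_induct)
  case less
  define C where "C = closure m v r A W"
  show ?case
  proof (cases "potential m v C W - W = {}")
    case True
    then show ?thesis
      using stop C_def by simp
  next
    case False
    define w where "w = pick \<sigma> r (potential m v C W - W)"
    have w: "w \<in> potential m v C W - W"
      using pick_in[OF False] w_def by simp
    then have "card (UNIV - insert w W) < card (UNIV - W)"
      by (intro psubset_card_mono) auto
    then show ?thesis
      using step[OF C_def w_def w] less by blast
  qed
qed

lemma mudan_from_keeps_winner:
  fixes W :: "'b::{finite,linorder} set" and \<sigma> :: "'b set \<Rightarrow> 'p::linorder"
  assumes "mudan_from m \<sigma> v r (A, W, p) = (A', W', p')" "i \<in> W"
  shows "i \<in> W' \<and> p' i = p i"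
  using assms
proof (induction A W p rule: mudan_from_induct[where m=m and \<sigma>=\<sigma> and v=v and r=r])
  case (stop A W p)
  then show ?case by (simp add: mudan_from_stop)
next
  case (step A W p C w)
  note run = step.prems(1)[unfolded mudan_from_step[OF step.hyps]]
  have "w \<noteq> i"
    using step.hyps(3) step.prems(2) by auto
  then show ?case
    using step.IH[OF run] step.prems(2) by simp
qed

lemma mudan_from_payment_le_value:
  fixes W :: "'b::{finite,linorder} set" and \<sigma> :: "'b set \<Rightarrow> 'p::linorder"
  assumes "\<And>x. v x \<ge> 0" "mudan_from m \<sigma> v r (A, W, p) = (A', W', p')"
    and "i \<in> W \<Longrightarrow> p i \<le> v i" "i \<in> W'"
  shows "p' i \<le> v i"
  using assms(2-)
proof (induction A W p rule: mudan_from_induct[where m=m and \<sigma>=\<sigma> and v=v and r=r])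
  case (stop A W p)
  then show ?case by (simp add: mudan_from_stop)
next
  case (step A W p C w)
  note run = step.prems(1)[unfolded mudan_from_step[OF step.hyps]]
  have "price m v C W \<le> v w"
    using price_le_candidate[OF assms(1) step.hyps(3)] .
  then have paid: "(p(w := price m v C W)) i \<le> v i" if "i \<in> insert w W"
    using that step.prems(2) by auto
  show ?case
    by (rule step.IH[OF run paid step.prems(3)])
qed

text \<open>Selecting a buyer changes neither the exhausted set nor the price, and both are monotone in
  the explored set.\<close>

lemma mudan_from_price_le_payment:
  fixes W :: "'b::{finite,linorder} set" and \<sigma> :: "'b set \<Rightarrow> 'p::linorder"
  assumes "\<And>x. v x \<ge> 0" "mudan_from m \<sigma> v r (A, W, p) = (A', W', p')" "i \<notin> W" "i \<in> W'"
  shows "price m v (closure m v r A W) W \<le> p' i"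
  using assms(2-)
proof (induction A W p rule: mudan_from_induct[where m=m and \<sigma>=\<sigma> and v=v and r=r])
  case (stop A W p)
  then show ?case by (simp add: mudan_from_stop)
next
  case (step A W p C w)
  note run = step.prems(1)[unfolded mudan_from_step[OF step.hyps]]
  show ?case
  proof (cases "w = i")
    case True
    then show ?thesis
      using mudan_from_keeps_winner[OF run] step.hyps(1) by simp
  next
    case False
    have "price m v C W = price m v C (insert w W)"
      using price_insert_candidate[OF step.hyps(3)] by simp
    also have "\<dots> \<le> price m v (closure m v r C (insert w W)) (insert w W)"
      by (rule price_mono[OF subset_closure assms(1)])
    also have "\<dots> \<le> p' i"
      using step.IH[OF run] False step.prems by simp
    finally show ?thesis
      using step.hyps(1) by simp
  qed
qed

lemma mudan_from_winner_not_exhausted: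
  fixes W :: "'b::{finite,linorder} set" and \<sigma> :: "'b set \<Rightarrow> 'p::linorder"
  assumes "mudan_from m \<sigma> v r (A, W, p) = (A', W', p')" "i \<notin> W" "i \<in> W'"
  shows "i \<notin> exhausted m v (closure m v r A W) W"
  using assms
proof (induction A W p rule: mudan_from_induct[where m=m and \<sigma>=\<sigma> and v=v and r=r])
  case (stop A W p)
  then show ?case by (simp add: mudan_from_stop)
next
  case (step A W p C w)
  note run = step.prems(1)[unfolded mudan_from_step[OF step.hyps]]
  show ?case
  proof (cases "w = i")
    case True
    then show ?thesis
      using step.hyps by (simp add: exhausted_def)
  next
    case False
    have "exhausted m v C W = exhausted m v C (insert w W)"
      using exhausted_insert_candidate[OF step.hyps(3)] by simp
    also have "\<dots> \<subseteq> exhausted m v (closure m v r C (insert w W)) (insert w W)"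
      by (rule exhausted_mono[OF subset_closure])
    finally show ?thesis
      using step.IH[OF run] False step.prems step.hyps(1) by auto
  qed
qed

section \<open>Truthful reporting dominates\<close>

context
  fixes vD vT :: "'b::{finite,linorder} \<Rightarrow> real" and rD rT :: "'b \<Rightarrow> 'b set" and i :: 'b
    and \<sigma> :: "'b set \<Rightarrow> 'p::linorder" and m :: nat
  assumes agree_v: "\<And>j. j \<noteq> i \<Longrightarrow> vD j = vT j"
    and agree_r: "\<And>j. j \<noteq> i \<Longrightarrow> rD j = rT j"
    and lower: "\<sigma> (rD i) \<le> \<sigma> (rT i)"
    and nonneg_D: "\<And>x. vD x \<ge> 0" and nonneg_T: "\<And>x. vT x \<ge> 0"
begin

lemma potential_price_truthful:
  assumes "i \<notin> exhausted m vD A W" "price m vD A W < vT i"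
  shows "potential m vT A W = potential m vD A W" and "price m vT A W = price m vD A W"
proof -
  have "potential m vT A W = potential m vD A W \<and> price m vT A W = price m vD A W"
  proof (cases "i \<in> A - W")
    case True
    then have "i \<in> potential m vD A W - W"
      using assms(1) by (auto simp: exhausted_def)
    then show ?thesis
      using potential_price_rebid[OF agree_v _ assms(2)] by auto
  next
    case False
    then have "vD x = vT x" if "x \<in> A - W" for x
      using that False agree_v[of x] by (cases "x = i") auto
    then show ?thesis
      using potential_price_cong[of A W vD vT m] by auto
  qed
  then show "potential m vT A W = potential m vD A W" "price m vT A W = price m vD A W"
    by auto
qed

lemma clos_closed_truthful:
  assumes "i \<notin> W" "i \<notin> exhausted m vD X W" "price m vD X W < vT i"
  shows "clos_closed m vT rT W X \<longleftrightarrow> clos_closed m vD rD W X"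
proof (rule clos_closed_cong)
  show exhausted: "exhausted m vT X W = exhausted m vD X W"
    using potential_price_truthful[OF assms(2,3)] by (simp add: exhausted_def)
  show "rT x = rD x" if "x \<in> W \<union> exhausted m vT X W" for x
  proof -
    have "x \<noteq> i"
      using that assms(1,2) exhausted by auto
    then show ?thesis
      using agree_r by simp
  qed
qed

text \<open>Buyer \<open>i\<close> is neither a winner nor exhausted, so its neighbour set is never explored.\<close>

lemma closure_truthful:
  assumes "i \<notin> W" and C: "C = closure m vD rD A W"
    and not_exhausted: "i \<notin> exhausted m vD C W" and bid: "price m vD C W < vT i"
  shows "closure m vT rT A W = C"
proof -
  let ?CT = "closure m vT rT A W"
  have "?CT \<subseteq> C"
  proof (rule closure_least)
    show "A \<subseteq> C"
      using C subset_closure by blast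
    show "clos_closed m vT rT W C"
      using clos_closed_truthful[OF \<open>i \<notin> W\<close> not_exhausted bid] clos_closed_closure C by blast
  qed
  then have "exhausted m vD ?CT W \<subseteq> exhausted m vD C W" "price m vD ?CT W \<le> price m vD C W"
    by (rule exhausted_mono, rule price_mono[OF _ nonneg_D])
  then have "i \<notin> exhausted m vD ?CT W" and "price m vD ?CT W < vT i"
    using not_exhausted bid by auto
  then have "clos_closed m vD rD W ?CT"
    using clos_closed_truthful[OF \<open>i \<notin> W\<close>] clos_closed_closure[of m vT rT W A] by blast
  then have "C \<subseteq> ?CT"
    unfolding C by (rule closure_least[OF subset_closure])
  with \<open>?CT \<subseteq> C\<close> show ?thesis by blast
qed

lemma mudan_from_truthful_wins:
  assumes "mudan_from m \<sigma> vD rD (A, W, p) = (A', W', p')"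
    and "mudan_from m \<sigma> vT rT (A, W, p) = (A'', W'', p'')"
    and "i \<notin> W" "i \<in> W'" "p' i < vT i"
  shows "i \<in> W'' \<and> p'' i \<le> p' i"
  using assms
proof (induction A W p rule: mudan_from_induct[where m=m and \<sigma>=\<sigma> and v=vD and r=rD])
  case (stop A W p)
  then show ?case by (simp add: mudan_from_stop)
next
  case (step A W p C w)
  let ?S = "potential m vD C W - W"
  note runD = step.prems(1)[unfolded mudan_from_step[OF step.hyps]]
  have le: "price m vD C W \<le> p' i"
    using mudan_from_price_le_payment[OF nonneg_D step.prems(1,3,4)] step.hyps(1) by simp
  have not_exhausted: "i \<notin> exhausted m vD C W"
    using mudan_from_winner_not_exhausted[OF step.prems(1,3,4)] step.hyps(1) by simp
  have bid: "price m vD C W < vT i"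
    using le step.prems(5) by simp
  have CT: "closure m vT rT A W = C"
    by (rule closure_truthful[OF step.prems(3) step.hyps(1) not_exhausted bid])
  have pot: "potential m vT C W = potential m vD C W" and pr: "price m vT C W = price m vD C W"
    using potential_price_truthful[OF not_exhausted bid] by auto
  have "?S \<noteq> {}"
    using step.hyps(3) by blast
  show ?case
  proof (cases "pick \<sigma> rT ?S = i")
    case True
    have "i \<in> potential m vT C W - W"
      using True pick_in[OF \<open>?S \<noteq> {}\<close>, where \<sigma>=\<sigma> and r=rT] pot by simp
    then have "mudan_from m \<sigma> vT rT (A, W, p) =
        mudan_from m \<sigma> vT rT (C, insert i W, p(i := price m vT C W))"
      using True pot by (intro mudan_from_step[OF CT[symmetric]]) simp_all
    then have "mudan_from m \<sigma> vT rT (C, insert i W, p(i := price m vT C W)) = (A'', W'', p'')"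
      using step.prems(2) by simp
    then have "i \<in> W'' \<and> p'' i = price m vT C W"
      using mudan_from_keeps_winner by fastforce
    then show ?thesis
      using le pr by simp
  next
    case False
    then have "pick \<sigma> rT ?S = w"
      using pick_lower_priority[where \<sigma>=\<sigma> and rD=rD and rT=rT and i=i, OF agree_r lower \<open>?S \<noteq> {}\<close>] step.hyps(2) by simp
    then have "mudan_from m \<sigma> vT rT (A, W, p) =
        mudan_from m \<sigma> vT rT (C, insert w W, p(w := price m vT C W))"
      using step.hyps(3) pot by (intro mudan_from_step[OF CT[symmetric]]) simp_all
    then have runT: "mudan_from m \<sigma> vT rT (C, insert w W, p(w := price m vD C W)) = (A'', W'', p'')"
      using step.prems(2) pr by simp
    have "i \<notin> insert w W"
      using False \<open>pick \<sigma> rT ?S = w\<close> step.prems(3) by simp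
    then show ?thesis
      using step.IH[OF runD runT _ step.prems(4,5)] by simp
  qed
qed

lemma mudan_from_truthful_dominates:
  assumes "mudan_from m \<sigma> vT rT (A, W, p) = (AT, WT, pT)"
    and "mudan_from m \<sigma> vD rD (A, W, p) = (AD, WD, pD)" and "i \<notin> W"
  shows "(if i \<in> WD then vT i - pD i else 0) \<le> (if i \<in> WT then vT i - pT i else 0)"
proof -
  have "i \<in> WT \<Longrightarrow> pT i \<le> vT i"
    using mudan_from_payment_le_value[OF nonneg_T assms(1)] \<open>i \<notin> W\<close> by blast
  then have truthful_nonneg: "0 \<le> (if i \<in> WT then vT i - pT i else 0)"
    by simp
  show ?thesis
  proof (cases "i \<in> WD \<and> pD i < vT i")
    case True
    then show ?thesis
      using mudan_from_truthful_wins[OF assms(2,1,3)] by auto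
  qed (use truthful_nonneg in auto)
qed

end

section \<open>Silent buyers\<close>

lemma mudan_from_cong:
  fixes A :: "'b::{finite,linorder} set" and \<sigma> :: "'b set \<Rightarrow> 'p::linorder"
  assumes agv: "\<And>x. x \<in> R \<Longrightarrow> v1 x = v2 x" and agr: "\<And>x. x \<in> R \<Longrightarrow> r1 x = r2 x"
    and closed: "\<And>x. x \<in> R \<Longrightarrow> r1 x \<subseteq> R" and "A \<subseteq> R" "W \<subseteq> R"
  shows "mudan_from m \<sigma> v1 r1 (A, W, p) = mudan_from m \<sigma> v2 r2 (A, W, p)"
  using assms(4,5)
proof (induction A W p rule: mudan_from_induct[where m=m and \<sigma>=\<sigma> and v=v1 and r=r1])
  case (stop A W p)
  define C where "C = closure m v1 r1 A W"
  have C: "closure m v2 r2 A W = C" "C \<subseteq> R"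
    using closure_cong_closed[OF agv agr closed stop.prems] C_def by auto
  have agree_C: "v1 x = v2 x" if "x \<in> C - W" for x
    using that agv C(2) by auto
  have "potential m v1 C W = potential m v2 C W"
    by (rule potential_price_cong(1)) (rule agree_C)
  then show ?case
    using stop.hyps C(1) C_def by (simp add: mudan_from_stop)
next
  case (step A W p C w)
  have C: "closure m v2 r2 A W = C" "C \<subseteq> R"
    using closure_cong_closed[OF agv agr closed step.prems] step.hyps(1) by auto
  have agree_C: "v1 x = v2 x" if "x \<in> C - W" for x
    using that agv C(2) by auto
  have agree_S: "r1 x = r2 x" if "x \<in> potential m v1 C W - W" for x
    using that potential_diff_subset[of m v1 C W] C(2) agr by blast
  have "potential m v1 C W = potential m v2 C W"
    by (rule potential_price_cong(1)) (rule agree_C)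
  moreover have "pick \<sigma> r1 (potential m v1 C W - W) = pick \<sigma> r2 (potential m v1 C W - W)"
    by (rule pick_cong) (rule agree_S)
  moreover have "price m v1 C W = price m v2 C W"
    by (rule potential_price_cong(2)) (rule agree_C)
  ultimately have step2: "mudan_from m \<sigma> v2 r2 (A, W, p) =
      mudan_from m \<sigma> v2 r2 (C, insert w W, p(w := price m v1 C W))"
    using step.hyps(2,3) by (subst mudan_from_step[OF C(1)[symmetric]]) simp_all
  have "insert w W \<subseteq> R"
    using step.hyps(3) potential_diff_subset[of m v1 C W] C(2) step.prems(2) by auto
  then show ?case
    using mudan_from_step[OF step.hyps] step.IH[OF C(2)] step2 by (simp add: fun_upd_def)
qed

lemma reach_subset_if_agree:
  assumes "\<And>x. x \<in> reach rs \<theta>a \<Longrightarrow> \<theta>b x = \<theta>a x"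
  shows "reach rs \<theta>a \<subseteq> reach rs \<theta>b"
proof
  fix x assume "x \<in> reach rs \<theta>a"
  then show "x \<in> reach rs \<theta>b"
    by induction (use assms in \<open>auto intro: reach.intros\<close>)
qed

text \<open>MUDAN only ever inspects reachable buyers, so the reports of the others are irrelevant.\<close>

lemma mudan_run_silence:
  fixes \<theta>a \<theta>b :: "'b::{finite,linorder} profile" and \<sigma> :: "'b set \<Rightarrow> 'p::linorder"
  assumes "\<And>x. x \<in> reach rs \<theta>a \<Longrightarrow> \<theta>b x = \<theta>a x"
  shows "mudan_run m \<sigma> rs (silence rs \<theta>b) =
    mudan_from m \<sigma> (\<lambda>j. fst (\<theta>a j)) (\<lambda>j. snd (\<theta>a j)) (rs, {}, \<lambda>_. 0)"
proof -
  let ?R = "reach rs \<theta>a"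
  have "?R \<subseteq> reach rs \<theta>b"
    by (rule reach_subset_if_agree[OF assms])
  then have agree: "silence rs \<theta>b x = \<theta>a x" if "x \<in> ?R" for x
    using that assms by (auto simp: silence_def)
  have "mudan_from m \<sigma> (\<lambda>j. fst (silence rs \<theta>b j)) (\<lambda>j. snd (silence rs \<theta>b j)) (rs, {}, \<lambda>_. 0)
      = mudan_from m \<sigma> (\<lambda>j. fst (\<theta>a j)) (\<lambda>j. snd (\<theta>a j)) (rs, {}, \<lambda>_. 0)"
    by (rule mudan_from_cong[where R = ?R])
      (use agree in \<open>auto intro: reach.intros\<close>)
  then show ?thesis
    by (simp add: mudan_run_def mudan_from_def)
qed

lemma utility_eq_mudan_from:
  fixes \<theta>a \<theta>b :: "'b::{finite,linorder} profile" and \<sigma> :: "'b set \<Rightarrow> 'p::linorder"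
  assumes "\<And>x. x \<in> reach rs \<theta>a \<Longrightarrow> \<theta>b x = \<theta>a x"
    and "mudan_from m \<sigma> (\<lambda>j. fst (\<theta>a j)) (\<lambda>j. snd (\<theta>a j)) (rs, {}, \<lambda>_. 0) = (A, W, p)"
  shows "utility m \<sigma> rs \<theta> i \<theta>b = (if i \<in> W then fst (\<theta> i) - p i else 0)"
  using mudan_run_silence[OF assms(1), where m=m and \<sigma>=\<sigma>] assms(2)
  by (simp add: utility_def payment_def alloc_def)

theorem lemma2:
  fixes \<theta> \<theta>' :: "'b::{finite,linorder} profile"
    and \<sigma> :: "'b set \<Rightarrow> 'p::linorder"
    and rs :: "'b set" and m :: nat and i :: 'b
    and v'' :: real and r'' :: "'b set"
  assumes "m \<ge> 1"
    and "\<And>X Y. X \<subseteq> Y \<Longrightarrow> \<sigma> X \<le> \<sigma> Y"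
    and "\<And>j. fst (\<theta> j) \<ge> 0"
    and "\<And>j. j \<in> reach rs \<theta>"
    and "\<And>j. fst (\<theta>' j) \<ge> 0 \<and> snd (\<theta>' j) \<subseteq> snd (\<theta> j)"
    and "v'' \<ge> 0" and "r'' \<subseteq> snd (\<theta> i)"
  shows "utility m \<sigma> rs \<theta> i (\<theta>'(i := \<theta> i))
         \<ge> utility m \<sigma> rs \<theta> i
              (\<lambda>j. if j = i then (v'', r'')
                   else if j \<in> reach rs (\<theta>'(i := (v'', r''))) then \<theta>' j
                   else (0, {}))"
proof -
  let ?T = "\<theta>'(i := \<theta> i)" and ?D = "\<theta>'(i := (v'', r''))"
  obtain AT WT pT where T:
    "mudan_from m \<sigma> (\<lambda>j. fst (?T j)) (\<lambda>j. snd (?T j)) (rs, {}, \<lambda>_. 0) = (AT, WT, pT)"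
    by (metis prod_cases3)
  obtain AD WD pD where D:
    "mudan_from m \<sigma> (\<lambda>j. fst (?D j)) (\<lambda>j. snd (?D j)) (rs, {}, \<lambda>_. 0) = (AD, WD, pD)"
    by (metis prod_cases3)
  have dominates:
    "(if i \<in> WD then fst (?T i) - pD i else 0) \<le> (if i \<in> WT then fst (?T i) - pT i else 0)"
    by (rule mudan_from_truthful_dominates[where i=i, OF _ _ _ _ _ T D])
      (use assms(2,3,5-7) in auto)
  have "utility m \<sigma> rs \<theta> i
      (\<lambda>j. if j = i then (v'', r'') else if j \<in> reach rs ?D then \<theta>' j else (0, {}))
      = (if i \<in> WD then fst (\<theta> i) - pD i else 0)"
    by (rule utility_eq_mudan_from[OF _ D]) (simp add: fun_upd_def)
  also have "\<dots> \<le> (if i \<in> WT then fst (\<theta> i) - pT i else 0)"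
    using dominates by (simp only: fun_upd_same)
  also have "\<dots> = utility m \<sigma> rs \<theta> i ?T"
    by (rule utility_eq_mudan_from[OF _ T, symmetric]) simp
  finally show ?thesis .
qed

end
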